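(* Let $\sigma>0$, $A>0$, and let $f:\mathbb{R}\to\mathbb{R}$ be continuous, bandlimited to $\sigma$ rad/s, with $|f(t)|\le A/(1+t^2)$ for all $t$. Let $\alpha>A\sigma$, $g(t)=\alpha t+f(t)$, and for $\beta\in\mathbb{R}$ define $h_\beta(u)=g^{-1}(u)-\beta u$, $u\in\mathbb{R}$. Then $h_\beta$ is of moderate decrease if and only if $\beta=1/\alpha$.
   Context: Fourier transform convention: $\hat f(\xi)=\int_{\mathbb{R}}f(t)e^{-i2\pi\xi t}\,dt$; $f$ is bandlimited to $\sigma$ rad/s if $\hat f(\xi)=0$ for $|\xi|>\sigma/(2\pi)$. A function $h$ is of moderate decrease if it is continuous and there is $A'>0$ with $|h(u)|\le A'/(1+u^2)$ for all $u\in\mathbb{R}$. Under the hypotheses $g$ is a strictly increasing bijection of $\mathbb{R}$. *)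

theory Defs
  imports "HOL-Analysis.Analysis"
begin

definition fourier :: "(real \<Rightarrow> real) \<Rightarrow> real \<Rightarrow> complex" where
  "fourier f \<xi> = integral UNIV (\<lambda>t. complex_of_real (f t) * exp (- (\<i> * complex_of_real (2 * pi * \<xi> * t))))"

text \<open>f is bandlimited to sigma rad/s.\<close>
definition bandlimited :: "(real \<Rightarrow> real) \<Rightarrow> real \<Rightarrow> bool" where
  "bandlimited f \<sigma> \<longleftrightarrow> (\<forall>\<xi>. \<bar>\<xi>\<bar> > \<sigma> / (2 * pi) \<longrightarrow> fourier f \<xi> = 0)"

definition moderate_decrease :: "(real \<Rightarrow> real) \<Rightarrow> bool" where
  "moderate_decrease h \<longleftrightarrow> continuous_on UNIV h \<and>
     (\<exists>A'>0. \<forall>u. \<bar>h u\<bar> \<le> A' / (1 + u^2))"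

end

theory Submission
  imports Defs "HOL-Probability.Levy"
begin

text \<open>Since \<open>g' = \<alpha> + f'\<close> and, by a weak form of Bernstein's inequality, \<open>\<bar>f'\<bar> \<le> \<sigma>' A\<close> for
  every \<open>\<sigma>' > \<sigma>\<close>, the hypothesis \<open>\<alpha> > A \<sigma>\<close> makes \<open>g\<close> a strictly increasing continuous
  bijection. With \<open>v = g\<inverse> u\<close> one has \<open>g\<inverse> u - u / \<alpha> = - f v / \<alpha>\<close>, which is
  \<open>O(1 / (1 + v\<^sup>2))\<close> and hence \<open>O(1 / (1 + u\<^sup>2))\<close> because \<open>u - \<alpha> v\<close> is bounded; for
  \<open>\<beta> \<noteq> 1 / \<alpha>\<close> the difference \<open>g\<inverse> u - \<beta> u\<close> grows linearly instead.

  The derivative bound comes from Fourier inversion, \<open>f x = (2\<pi>)\<inverse> \<integral>\<^bsub>-\<sigma>\<^esub>\<^sup>\<sigma> exp (-i t x) \<psi> t dt\<close>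
  with \<open>\<psi>\<close> the Fourier transform of \<open>f\<close>, obtained from Levy's inversion theorem after writing
  \<open>f\<close> as a difference of two densities.
  Differentiating brings down the multiplier \<open>-i t\<close>; on \<open>[-\<sigma>, \<sigma>]\<close> it is uniformly
  approximated by partial sums of the triangle wave of period \<open>4 \<sigma>'\<close>, and each sine term acts
  on \<open>f\<close> as a difference \<open>f (x - s) - f (x + s)\<close>, with total weight \<open>\<sigma>'\<close>.\<close>

text \<open>Partial sums of the Fourier series of the triangle wave, which equals \<open>\<pi>/4 \<cdot> x\<close> on
  \<open>[-\<pi>/2, \<pi>/2]\<close>.\<close>
definition odd_sine_sum :: "nat \<Rightarrow> real \<Rightarrow> real" where
  "odd_sine_sum N x = (\<Sum>k<N. (-1)^k * sin (real (2*k+1) * x) / (real (2*k+1))^2)"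

definition odd_cosine_sum :: "nat \<Rightarrow> real \<Rightarrow> real" where
  "odd_cosine_sum N x = (\<Sum>k<N. (-1)^k * cos (real (2*k+1) * x) / real (2*k+1))"

lemma alternating_odd_sine_sum_mult_cos:
  "(\<Sum>k<N. (-1)^k * sin (real (2*k+1) * x)) * (2 * cos x) = - ((-1)^N * sin (2 * real N * x))"
proof (induction N)
  case 0 then show ?case by simp
next
  case (Suc N)
  have "sin (real (2*N+1) * x) * (2 * cos x) = sin (real (2*N+1) * x + x) + sin (real (2*N+1) * x - x)"
    unfolding sin_add sin_diff by simp
  also have "\<dots> = sin (2 * real (Suc N) * x) + sin (2 * real N * x)"
    by (simp add: algebra_simps)
  finally show ?case
    using Suc by (simp add: algebra_simps)
qed

lemma odd_sine_sum_has_derivative: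
  "(odd_sine_sum N has_real_derivative odd_cosine_sum N x) (at x within S)"
proof -
  have sin_deriv: "((\<lambda>x. c * sin (a * x)) has_real_derivative c * (cos (a * x) * a)) (at x within S)"
    for c a :: real
    by (auto intro!: derivative_eq_intros)
  have "odd_sine_sum N = (\<lambda>x. \<Sum>k<N. (-1)^k / (real (2*k+1))^2 * sin (real (2*k+1) * x))"
    unfolding odd_sine_sum_def by (auto intro!: sum.cong)
  then have "(odd_sine_sum N has_real_derivative
      (\<Sum>k<N. (-1)^k / (real (2*k+1))^2 * (cos (real (2*k+1) * x) * real (2*k+1)))) (at x within S)"
    by (simp only:) (rule DERIV_sum, rule sin_deriv)
  moreover have "(\<Sum>k<N. (-1)^k / (real (2*k+1))^2 * (cos (real (2*k+1) * x) * real (2*k+1)))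
      = odd_cosine_sum N x"
    unfolding odd_cosine_sum_def by (intro sum.cong refl) (simp add: power2_eq_square)
  ultimately show ?thesis by simp
qed

lemma continuous_on_odd_sine_sum [continuous_intros]:
  "continuous_on S g \<Longrightarrow> continuous_on S (\<lambda>x. odd_sine_sum N (g x))"
  using DERIV_continuous_on[OF odd_sine_sum_has_derivative]
  by (rule continuous_on_compose2) auto

lemma odd_cosine_sum_has_derivative:
  fixes N :: nat and x :: real
  assumes "cos x \<noteq> 0"
  shows "(odd_cosine_sum N has_real_derivative (-1)^N * sin (2 * real N * x) / (2 * cos x)) (at x within S)"
proof -
  have "(odd_cosine_sum N has_real_derivative - (\<Sum>k<N. (-1)^k * sin (real (2*k+1) * x))) (at x within S)"
    unfolding odd_cosine_sum_def
    by (rule derivative_eq_intros refl | simp)+ (simp add: sum_negf[symmetric] ac_simps)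
  moreover have "- (\<Sum>k<N. (-1)^k * sin (real (2*k+1) * x)) = (-1)^N * sin (2 * real N * x) / (2 * cos x)"
    using alternating_odd_sine_sum_mult_cos[of x N] assms by (simp add: field_simps)
  ultimately show ?thesis by simp
qed

text \<open>The added term has the same oscillating derivative as the cosine sum, up to a term of
  size \<open>O(1/N)\<close>; this is an integration by parts in disguise.\<close>
lemma odd_cosine_sum_corrected_has_derivative:
  fixes N :: nat and y :: real
  assumes "cos y \<noteq> 0" and "N \<ge> 1"
  shows "((\<lambda>y. odd_cosine_sum N y + (-1)^N * cos (2 * real N * y) / (4 * real N * cos y))
    has_real_derivative (-1)^N * cos (2 * real N * y) * sin y / (4 * real N * (cos y)^2)) (at y within S)"
proof -
  have "((\<lambda>y. (-1)^N * cos (2 * real N * y) / (4 * real N * cos y)) has_real_derivative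
      (-1)^N * cos (2 * real N * y) * sin y / (4 * real N * (cos y)^2)
      - (-1)^N * sin (2 * real N * y) / (2 * cos y)) (at y within S)"
    using assms by (auto intro!: derivative_eq_intros) (simp add: field_simps power2_eq_square)
  from DERIV_add[OF odd_cosine_sum_has_derivative[where N=N, OF assms(1)] this] show ?thesis
    by simp
qed

lemma odd_cosine_sum_near_zero:
  fixes c x :: real
  assumes c: "0 \<le> c" "c < pi/2" and N: "N \<ge> 1" and x: "\<bar>x\<bar> \<le> c"
  shows "\<bar>odd_cosine_sum N x - odd_cosine_sum N 0\<bar> \<le> (c / (cos c)^2 + 2 / cos c) / (4 * real N)"
proof -
  have cos_c: "cos c > 0" using c by (intro cos_gt_zero_pi) auto
  have cos_le: "cos c \<le> cos y" if "y \<in> {-c..c}" for y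
    using that c cos_monotone_0_pi_le[of "\<bar>y\<bar>" c] by auto
  have cos_pos: "cos y > 0" if "y \<in> {-c..c}" for y using cos_le[OF that] cos_c by linarith
  define w where "w = (\<lambda>y. (-1)^N * cos (2 * real N * y) / (4 * real N * cos y))"
  define E where "E = (\<lambda>y. odd_cosine_sum N y + w y)"
  have E_deriv_bound: "norm ((-1)^N * cos (2 * real N * y) * sin y / (4 * real N * (cos y)^2))
      \<le> 1 / (4 * real N * (cos c)^2)" if "y \<in> {-c..c}" for y
  proof -
    have "norm ((-1)^N * cos (2 * real N * y) * sin y / (4 * real N * (cos y)^2))
        = \<bar>cos (2 * real N * y)\<bar> * \<bar>sin y\<bar> / (4 * real N * (cos y)^2)"
      by (simp add: abs_mult)
    also have "\<dots> \<le> 1 / (4 * real N * (cos y)^2)"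
      by (intro divide_right_mono mult_le_one) auto
    also have "\<dots> \<le> 1 / (4 * real N * (cos c)^2)"
      using cos_c cos_le[OF that] N by (intro divide_left_mono mult_left_mono power_mono) auto
    finally show ?thesis .
  qed
  have E_deriv: "(E has_field_derivative (-1)^N * cos (2 * real N * y) * sin y / (4 * real N * (cos y)^2))
      (at y within {-c..c})" if "y \<in> {-c..c}" for y
    unfolding E_def w_def using cos_pos[OF that] N by (intro odd_cosine_sum_corrected_has_derivative) auto
  have "norm (E x - E 0) \<le> 1 / (4 * real N * (cos c)^2) * norm (x - 0)"
    by (rule field_differentiable_bound[OF _ E_deriv E_deriv_bound]) (use x c in auto)
  then have E_diff: "\<bar>E x - E 0\<bar> \<le> c / (4 * real N * (cos c)^2)"
    using x by (simp add: divide_right_mono order_trans)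
  have w_bound: "\<bar>w y\<bar> \<le> 1 / (4 * real N * cos c)" if "y \<in> {-c..c}" for y
  proof -
    have "\<bar>w y\<bar> \<le> 1 / (4 * real N * cos y)"
      unfolding w_def using cos_pos[OF that] N by (simp add: abs_mult divide_right_mono)
    also have "\<dots> \<le> 1 / (4 * real N * cos c)"
      using cos_c cos_le[OF that] N by (intro divide_left_mono mult_left_mono) auto
    finally show ?thesis .
  qed
  have "\<bar>odd_cosine_sum N x - odd_cosine_sum N 0\<bar> \<le> \<bar>E x - E 0\<bar> + \<bar>w x\<bar> + \<bar>w 0\<bar>"
    unfolding E_def by linarith
  also have "\<dots> \<le> c / (4 * real N * (cos c)^2) + 1 / (4 * real N * cos c) + 1 / (4 * real N * cos c)"
    using E_diff w_bound[of x] w_bound[of 0] x c by (intro add_mono) (auto simp: abs_le_iff)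
  also have "\<dots> = (c / (cos c)^2 + 2 / cos c) / (4 * real N)"
    using cos_c N by (simp add: field_simps power2_eq_square)
  finally show ?thesis .
qed

lemma odd_sine_sum_near_linear:
  fixes c x :: real
  assumes c: "0 \<le> c" "c < pi/2" and N: "N \<ge> 1" and x: "\<bar>x\<bar> \<le> c"
  shows "\<bar>odd_sine_sum N x - odd_cosine_sum N 0 * x\<bar> \<le> (c / (cos c)^2 + 2 / cos c) / (4 * real N) * \<bar>x\<bar>"
proof -
  define P where "P = (\<lambda>y. odd_sine_sum N y - odd_cosine_sum N 0 * y)"
  have "(P has_field_derivative (odd_cosine_sum N y - odd_cosine_sum N 0)) (at y within {-c..c})" for y
    unfolding P_def by (auto intro!: derivative_eq_intros odd_sine_sum_has_derivative)
  then have "norm (P x - P 0) \<le> (c / (cos c)^2 + 2 / cos c) / (4 * real N) * norm (x - 0)"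
    using odd_cosine_sum_near_zero[OF c N] x c
    by (intro field_differentiable_bound[of "{-c..c}"]) auto
  then show ?thesis unfolding P_def odd_sine_sum_def by simp
qed

lemma odd_cosine_sum_zero_tendsto: "(\<lambda>N. odd_cosine_sum N 0) \<longlonglongrightarrow> pi/4"
proof -
  have "(\<lambda>k. (-1)^k * (1 / real (k * 2 + 1) * 1 ^ (k * 2 + 1))) sums arctan 1"
    using arctan_series[of 1] summable_arctan_series[of 1] by (simp add: sums_iff)
  then show ?thesis
    by (simp add: odd_cosine_sum_def sums_def arctan_one mult.commute)
qed

lemma odd_sine_sum_uniform_limit:
  assumes "0 \<le> c" "c < pi/2"
  shows "uniform_limit {-c..c} odd_sine_sum (\<lambda>x. pi/4 * x) sequentially"
proof (rule uniform_limitI)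
  fix e :: real assume e: "e > 0"
  define K where "K = c / (cos c)^2 + 2 / cos c"
  define e' where "e' = e / (2 * (c + 1))"
  have e': "e' > 0" unfolding e'_def using e assms by auto
  have K_eventually: "\<forall>\<^sub>F N in sequentially. K / (4 * real N) < e'"
    using order_tendstoD(2)[OF lim_const_over_n[of "K / 4"] e'] by simp
  have "\<forall>\<^sub>F N in sequentially. \<bar>odd_cosine_sum N 0 - pi/4\<bar> < e'"
    using odd_cosine_sum_zero_tendsto e' by (auto simp: tendsto_iff dist_real_def)
  then show "\<forall>\<^sub>F N in sequentially. \<forall>x\<in>{-c..c}. dist (odd_sine_sum N x) (pi/4 * x) < e"
    using K_eventually eventually_ge_at_top[of 1]
  proof eventually_elim
    case (elim N)
    show ?case
    proof
      fix x assume "x \<in> {-c..c}"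
      then have x: "\<bar>x\<bar> \<le> c" by auto
      have "\<bar>odd_sine_sum N x - pi/4 * x\<bar>
          \<le> \<bar>odd_sine_sum N x - odd_cosine_sum N 0 * x\<bar> + \<bar>odd_cosine_sum N 0 - pi/4\<bar> * \<bar>x\<bar>"
      proof -
        have "odd_sine_sum N x - pi/4 * x
            = (odd_sine_sum N x - odd_cosine_sum N 0 * x) + (odd_cosine_sum N 0 - pi/4) * x"
          by (simp add: algebra_simps)
        then show ?thesis by (metis abs_mult abs_triangle_ineq)
      qed
      also have "\<dots> \<le> K / (4 * real N) * \<bar>x\<bar> + e' * c"
        using odd_sine_sum_near_linear[OF assms elim(3) x] elim x
        by (intro add_mono mult_mono) (auto simp: K_def)
      also have "\<dots> \<le> e' * c + e' * c"
        using elim x by (intro add_mono mult_mono) auto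
      also have "\<dots> = e / (c + 1) * c"
        unfolding e'_def using assms by (simp add: field_simps add_nonneg_eq_0_iff)
      also have "\<dots> < e"
        using assms e by (simp add: field_simps)
      finally show "dist (odd_sine_sum N x) (pi/4 * x) < e" by (simp add: dist_real_def)
    qed
  qed
qed

lemma odd_sine_sum_scaled_approx:
  assumes "0 \<le> \<sigma>" "\<sigma> < \<sigma>'" and "\<delta> > 0"
  obtains N where "\<And>t. t \<in> {-\<sigma>..\<sigma>} \<Longrightarrow>
    \<bar>8 * \<sigma>' / pi^2 * odd_sine_sum N (pi / (2 * \<sigma>') * t) - t\<bar> \<le> 8 * \<sigma>' / pi^2 * \<delta>"
proof -
  define \<kappa> where "\<kappa> = 8 * \<sigma>' / pi^2"
  define \<omega> where "\<omega> = pi / (2 * \<sigma>')"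
  have "\<sigma>' > 0" "\<kappa> > 0" "\<omega> > 0"
    using assms by (auto simp: \<kappa>_def \<omega>_def)
  then have "\<kappa> * (pi/4 * \<omega>) = 1" "0 \<le> \<omega> * \<sigma>" "\<omega> * \<sigma> < pi / 2"
    using assms by (auto simp: \<kappa>_def \<omega>_def field_simps power2_eq_square)
  from uniform_limitD[OF odd_sine_sum_uniform_limit[OF this(2,3)] \<open>\<delta> > 0\<close>]
  obtain N where N: "\<forall>y\<in>{-(\<omega> * \<sigma>)..\<omega> * \<sigma>}. dist (odd_sine_sum N y) (pi/4 * y) < \<delta>"
    unfolding eventually_sequentially by blast
  have "\<bar>\<kappa> * odd_sine_sum N (\<omega> * t) - t\<bar> \<le> \<kappa> * \<delta>" if "t \<in> {-\<sigma>..\<sigma>}" for t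
  proof -
    have "\<omega> * t \<in> {-(\<omega> * \<sigma>)..\<omega> * \<sigma>}"
      using that \<open>\<omega> > 0\<close> mult_left_mono[of "-\<sigma>" t \<omega>] mult_left_mono[of t \<sigma> \<omega>] by auto
    moreover have "\<kappa> * odd_sine_sum N (\<omega> * t) - t = \<kappa> * (odd_sine_sum N (\<omega> * t) - pi/4 * (\<omega> * t))"
      using \<open>\<kappa> * (pi/4 * \<omega>) = 1\<close> by (metis mult.assoc mult.left_neutral right_diff_distrib)
    ultimately show ?thesis
      using N \<open>\<kappa> > 0\<close> by (auto simp: dist_real_def abs_mult less_imp_le)
  qed
  then show ?thesis
    using that unfolding \<kappa>_def \<omega>_def by blast
qed

lemma odd_inverse_squares_sums: "(\<lambda>k. 1 / (real (2*k+1))^2) sums (pi^2/8)"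
proof -
  have s: "(\<lambda>n. 1 / (real n + 1)^2) sums (pi^2/6)"
    using inverse_squares_sums by (simp add: add.commute)
  have "(\<lambda>n. \<Sum>j\<in>{n*2..<n*2+2}. 1 / (real j + 1)^2) sums (pi^2/6)"
    using sums_group[OF s, of 2] by simp
  moreover have "(\<Sum>j\<in>{n*2..<n*2+2}. 1 / (real j + 1)^2)
      = 1 / (real (2*n+1))^2 + 1/4 * (1 / (real n + 1)^2)" for n
  proof -
    have "{n*2..<n*2+2} = {n*2, n*2+1}" by auto
    then show ?thesis by (simp add: field_simps power2_eq_square)
  qed
  ultimately have "(\<lambda>n. 1 / (real (2*n+1))^2 + 1/4 * (1 / (real n + 1)^2)) sums (pi^2/6)"
    by simp
  from sums_diff[OF this sums_mult[OF s, of "1/4"]] show ?thesis by simp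
qed

lemma sum_odd_inverse_squares_le: "(\<Sum>k<N. 1 / (real (2*k+1))^2) \<le> pi^2/8"
proof -
  have "(\<Sum>k<N. 1 / (real (2*k+1))^2) \<le> (\<Sum>k. 1 / (real (2*k+1))^2)"
    using odd_inverse_squares_sums by (intro sum_le_suminf) (auto simp: sums_iff)
  then show ?thesis using odd_inverse_squares_sums by (simp add: sums_iff)
qed

text \<open>The transform in the sign convention of \<open>char\<close>, so that Levy's inversion theorem applies.\<close>
definition fourier_char :: "(real \<Rightarrow> real) \<Rightarrow> real \<Rightarrow> complex" where
  "fourier_char f s = (CLINT x|lborel. complex_of_real (f x) * iexp (s * x))"

lemma integrable_inverse_square_bound:
  fixes f :: "real \<Rightarrow> real"
  assumes "f \<in> borel_measurable borel" and "\<And>t. \<bar>f t\<bar> \<le> A / (1 + t^2)"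
  shows "integrable lborel f"
proof (rule Bochner_Integration.integrable_bound)
  have "integrable lborel (\<lambda>x. inverse (1 + x^2) :: real)"
    using integrable_inverse_1_plus_square by (simp add: set_integrable_def)
  then show "integrable lborel (\<lambda>x. A * inverse (1 + x^2) :: real)" by simp
  show "f \<in> borel_measurable lborel" using assms(1) by simp
  show "AE x in lborel. norm (f x) \<le> norm (A * inverse (1 + x^2))"
    using assms(2) by (intro AE_I2) (auto simp: divide_inverse intro: order_trans[OF _ abs_ge_self])
qed

lemma integrable_mult_iexp:
  fixes f :: "real \<Rightarrow> real"
  assumes "integrable lborel f" "f \<in> borel_measurable borel"
  shows "integrable lborel (\<lambda>x. complex_of_real (f x) * iexp (s * x))"
  using assms(1) by (rule Bochner_Integration.integrable_bound) (use assms(2) in \<open>auto simp: norm_mult\<close>)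

lemma fourier_eq_fourier_char:
  fixes f :: "real \<Rightarrow> real"
  assumes "integrable lborel f" "f \<in> borel_measurable borel"
  shows "fourier f \<xi> = fourier_char f (- 2 * pi * \<xi>)"
proof -
  have "fourier f \<xi> = integral UNIV (\<lambda>x. complex_of_real (f x) * iexp ((- 2 * pi * \<xi>) * x))"
    unfolding fourier_def by (intro arg_cong[where f="integral UNIV"] ext) (simp add: mult.commute)
  also have "\<dots> = fourier_char f (- 2 * pi * \<xi>)"
    unfolding fourier_char_def using integrable_mult_iexp[OF assms] by (rule integral_lborel)
  finally show ?thesis .
qed

lemma bandlimited_fourier_char_eq_0:
  fixes f :: "real \<Rightarrow> real"
  assumes "integrable lborel f" "f \<in> borel_measurable borel" "bandlimited f \<sigma>" "\<bar>s\<bar> > \<sigma>"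
  shows "fourier_char f s = 0"
proof -
  have "fourier f (- s / (2 * pi)) = 0"
    using assms(3,4) unfolding bandlimited_def by (auto simp: divide_strict_right_mono)
  then show ?thesis using fourier_eq_fourier_char[OF assms(1,2), of "- s / (2 * pi)"] by simp
qed

lemma isCont_fourier_char:
  fixes f :: "real \<Rightarrow> real"
  assumes [measurable]: "f \<in> borel_measurable borel" and "integrable lborel f"
  shows "isCont (fourier_char f) s"
  unfolding continuous_at_sequentially comp_def fourier_char_def
proof safe
  fix X assume "X \<longlonglongrightarrow> s"
  then show "(\<lambda>n. CLINT x|lborel. complex_of_real (f x) * iexp (X n * x))
      \<longlonglongrightarrow> (CLINT x|lborel. complex_of_real (f x) * iexp (s * x))"
    using assms(2)
    by (intro integral_dominated_convergence[where w="\<lambda>x. \<bar>f x\<bar>"])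
       (auto intro!: tendsto_intros simp: norm_mult)
qed

lemma continuous_on_fourier_char:
  fixes f :: "real \<Rightarrow> real"
  assumes "f \<in> borel_measurable borel" and "integrable lborel f"
  shows "continuous_on UNIV (fourier_char f)"
  using assms by (intro continuous_at_imp_continuous_on ballI isCont_fourier_char)

lemma fourier_char_diff:
  fixes p q :: "real \<Rightarrow> real"
  assumes "p \<in> borel_measurable borel" "integrable lborel p"
    and "q \<in> borel_measurable borel" "integrable lborel q"
  shows "fourier_char (\<lambda>x. p x - q x) s = fourier_char p s - fourier_char q s"
  unfolding fourier_char_def
  using integrable_mult_iexp[OF assms(2,1)] integrable_mult_iexp[OF assms(4,3)]
  by (simp add: left_diff_distrib flip: Bochner_Integration.integral_diff)

lemma normalized_density:
  fixes p :: "real \<Rightarrow> real"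
  assumes [measurable]: "p \<in> borel_measurable borel"
    and p: "integrable lborel p" "\<And>x. p x \<ge> 0" and m: "m = (\<integral>x. p x \<partial>lborel)" "m > 0"
  defines "M \<equiv> density lborel (\<lambda>x. ennreal (p x / m))"
  shows "real_distribution M"
    and "char M t = fourier_char p t / m"
    and "A \<in> sets borel \<Longrightarrow> measure M A = (LINT x:A|lborel. p x) / m"
proof -
  have "emeasure M (space M) = (\<integral>\<^sup>+ x. ennreal (p x / m) \<partial>lborel)"
    unfolding M_def by (simp add: emeasure_density nn_integral_set_ennreal[symmetric])
  also have "\<dots> = ennreal (\<integral>x. p x / m \<partial>lborel)"
    using p m by (intro nn_integral_eq_integral) auto
  also have "\<dots> = 1" using m by simp
  finally have "prob_space M" by (rule prob_spaceI)
  then show "real_distribution M"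
    by (simp add: real_distribution_def real_distribution_axioms_def M_def)
  have "char M t = (CLINT x|lborel. (p x / m) *\<^sub>R iexp (t * x))"
    unfolding char_def M_def using p m by (subst integral_density) auto
  also have "\<dots> = (CLINT x|lborel. complex_of_real (p x) * iexp (t * x) / complex_of_real m)"
    by (intro Bochner_Integration.integral_cong refl) (simp add: scaleR_conv_of_real)
  finally show "char M t = fourier_char p t / m"
    unfolding fourier_char_def by simp
  assume [measurable]: "A \<in> sets borel"
  have "measure M A = (\<integral>x. indicator A x \<partial>M)"
    by (simp add: M_def)
  also have "\<dots> = (\<integral>x. (p x / m) *\<^sub>R indicator A x \<partial>lborel)"
    unfolding M_def using p m by (subst integral_density) auto
  also have "\<dots> = (\<integral>x. indicator A x * p x / m \<partial>lborel)"
    by (intro Bochner_Integration.integral_cong refl) simp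
  finally show "measure M A = (LINT x:A|lborel. p x) / m"
    by (simp add: set_lebesgue_integral_def)
qed

lemma has_vector_derivative_iexp_linear:
  "((\<lambda>x. iexp (-(t * x))) has_vector_derivative - (\<i> * t * iexp (-(t * y)))) (at y within S)"
proof -
  have "((\<lambda>x. - (t * x)) has_vector_derivative - t) (at y within S)"
    by (auto intro!: derivative_eq_intros)
  from vector_diff_chain_within[OF this has_vector_derivative_iexp]
  show ?thesis by (simp add: o_def scaleR_conv_of_real ac_simps)
qed

lemma continuous_on_interval_kernel:
  "continuous_on UNIV (\<lambda>t. integral {a..b} (\<lambda>x. iexp (-(t * x))))"
proof -
  have "continuous_on (UNIV \<times> cbox a b) (\<lambda>(t, x). iexp (-(t * x)))"
    by (auto intro!: continuous_intros simp: split_beta)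
  from integral_continuous_on_param[OF this] show ?thesis by simp
qed

lemma interval_kernel_eq:
  assumes "a \<le> b" "t \<noteq> 0"
  shows "integral {a..b} (\<lambda>x. iexp (-(t * x))) = (iexp (-(t * a)) - iexp (-(t * b))) / (\<i> * t)"
proof -
  define F where "F = (\<lambda>x. \<i> / t * iexp (-(t * x)))"
  have "((\<lambda>x. iexp (-(t * x))) has_integral F b - F a) {a..b}"
  proof (rule fundamental_theorem_of_calculus[OF assms(1)])
    fix x
    have "(F has_vector_derivative \<i> / t * - (\<i> * t * iexp (-(t * x)))) (at x within {a..b})"
      unfolding F_def by (intro has_vector_derivative_mult_right has_vector_derivative_iexp_linear)
    then show "(F has_vector_derivative iexp (-(t * x))) (at x within {a..b})"
      using assms(2) by simp
  qed
  then show ?thesis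
    unfolding F_def using assms(2) by (simp add: integral_unique field_simps)
qed

lemma Levy_integral_eq_interval_kernel_integral:
  fixes \<phi> :: "real \<Rightarrow> complex"
  assumes "continuous_on UNIV \<phi>" and "a \<le> b" and "T \<ge> 0"
  shows "(CLBINT t=ereal (-T)..ereal T. (iexp (-(t * a)) - iexp (-(t * b))) / (\<i> * t) * \<phi> t)
       = integral {-T..T} (\<lambda>t. integral {a..b} (\<lambda>x. iexp (-(t * x))) * \<phi> t)"
proof -
  have [measurable]: "\<phi> \<in> borel_measurable borel"
    using assms(1) by (rule borel_measurable_continuous_onI)
  have "(CLBINT t=ereal (-T)..ereal T. (iexp (-(t * a)) - iexp (-(t * b))) / (\<i> * t) * \<phi> t)
      = (CLBINT t:{-T..T}. (iexp (-(t * a)) - iexp (-(t * b))) / (\<i> * t) * \<phi> t)"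
    using assms(3) by (intro interval_integral_Icc) simp
  also have "\<dots> = (CLBINT t:{-T..T}. integral {a..b} (\<lambda>x. iexp (-(t * x))) * \<phi> t)"
  proof (rule set_lebesgue_integral_cong_AE)
    have "(\<lambda>t. integral {a..b} (\<lambda>x. iexp (-(t * x)))) \<in> borel_measurable borel"
      using continuous_on_interval_kernel by (rule borel_measurable_continuous_onI)
    then show "(\<lambda>t. integral {a..b} (\<lambda>x. iexp (-(t * x))) * \<phi> t) \<in> borel_measurable lborel"
      by simp
    show "AE t\<in>{-T..T} in lborel. (iexp (-(t * a)) - iexp (-(t * b))) / (\<i> * t) * \<phi> t
        = integral {a..b} (\<lambda>x. iexp (-(t * x))) * \<phi> t"
      using AE_lborel_singleton[of 0]
      by eventually_elim (intro impI, subst interval_kernel_eq[OF assms(2)], simp_all)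
  qed auto
  also have "\<dots> = integral {-T..T} (\<lambda>t. integral {a..b} (\<lambda>x. iexp (-(t * x))) * \<phi> t)"
    using assms(1) continuous_on_interval_kernel
    by (intro set_borel_integral_eq_integral borel_integrable_atLeastAtMost')
       (auto intro!: continuous_intros intro: continuous_on_subset)
  finally show ?thesis .
qed

lemma Levy_inversion_nonneg:
  fixes p :: "real \<Rightarrow> real"
  assumes [measurable]: "p \<in> borel_measurable borel"
    and p: "integrable lborel p" "\<And>x. p x \<ge> 0" "(\<integral>x. p x \<partial>lborel) > 0" and "a \<le> b"
  shows "(\<lambda>T. 1 / (2 * pi) * integral {- real T..real T}
            (\<lambda>t. integral {a..b} (\<lambda>x. iexp (-(t * x))) * fourier_char p t))
    \<longlonglongrightarrow> complex_of_real (LINT x:{a<..b}|lborel. p x)"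
proof -
  define m where "m = (\<integral>x. p x \<partial>lborel)"
  have m: "m > 0" using p(3) unfolding m_def .
  note M = normalized_density[OF assms(1) p(1,2) m_def m]
  interpret M: real_distribution "density lborel (\<lambda>x. ennreal (p x / m))" by (fact M(1))
  have "(LINT y:{x}|lborel. p y) = 0" for x
    unfolding set_lebesgue_integral_def using AE_lborel_singleton[of x]
    by (intro integral_eq_zero_AE) (auto elim: eventually_mono)
  then have "measure (density lborel (\<lambda>x. ennreal (p x / m))) {x} = 0" for x
    by (simp add: M(3))
  from tendsto_mult[OF tendsto_const[of "complex_of_real m"] M.Levy_Inversion[OF \<open>a \<le> b\<close> this this]]
  have "(\<lambda>T. complex_of_real m * (1 / (2 * pi) * ((CLBINT t=-T..T. (iexp (-(t * a)) - iexp (-(t * b)))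
      / (\<i> * t) * fourier_char p t) / complex_of_real m)))
    \<longlonglongrightarrow> complex_of_real m * complex_of_real ((LINT x:{a<..b}|lborel. p x) / m)"
    by (simp only: M(2,3) sets_lborel atLeastAtMost_borel greaterThanAtMost_borel
        times_divide_eq_right interval_lebesgue_integral_divide)
  then show ?thesis
    using m Levy_integral_eq_interval_kernel_integral[OF continuous_on_fourier_char[OF assms(1) p(1)] \<open>a \<le> b\<close>]
    by simp
qed

lemma Levy_inversion_integrable:
  fixes f :: "real \<Rightarrow> real"
  assumes [measurable]: "f \<in> borel_measurable borel" and f: "integrable lborel f" and "a \<le> b"
  shows "(\<lambda>T. 1 / (2 * pi) * integral {- real T..real T}
            (\<lambda>t. integral {a..b} (\<lambda>x. iexp (-(t * x))) * fourier_char f t))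
    \<longlonglongrightarrow> complex_of_real (LINT x:{a<..b}|lborel. f x)"
proof -
  \<comment> \<open>The indicator of [0,1] only serves to give both parts positive mass.\<close>
  define e :: "real \<Rightarrow> real" where "e = indicator {0..1}"
  define p where "p = (\<lambda>x. max (f x) 0 + e x)"
  define q where "q = (\<lambda>x. max (- f x) 0 + e x)"
  have [measurable]: "p \<in> borel_measurable borel" "q \<in> borel_measurable borel"
    unfolding p_def q_def e_def by measurable
  have e: "integrable lborel e" "(\<integral>x. e x \<partial>lborel) = 1"
    unfolding e_def by (auto intro: integrable_real_indicator)
  have pq: "integrable lborel p" "integrable lborel q"
    unfolding p_def q_def using f e by (auto intro!: integrable_max)
  have "(\<integral>x. e x \<partial>lborel) \<le> (\<integral>x. p x \<partial>lborel)" "(\<integral>x. e x \<partial>lborel) \<le> (\<integral>x. q x \<partial>lborel)"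
    using e(1) pq by (intro integral_mono; simp add: p_def q_def)+
  then have "(\<integral>x. p x \<partial>lborel) > 0" "(\<integral>x. q x \<partial>lborel) > 0"
    using e by auto
  moreover have "p x \<ge> 0" "q x \<ge> 0" for x
    unfolding p_def q_def e_def by (auto simp: indicator_def)
  ultimately have
      p_lim: "(\<lambda>T. 1 / (2 * pi) * integral {- real T..real T}
          (\<lambda>t. integral {a..b} (\<lambda>x. iexp (-(t * x))) * fourier_char p t))
        \<longlonglongrightarrow> complex_of_real (LINT x:{a<..b}|lborel. p x)" and
      q_lim: "(\<lambda>T. 1 / (2 * pi) * integral {- real T..real T}
          (\<lambda>t. integral {a..b} (\<lambda>x. iexp (-(t * x))) * fourier_char q t))
        \<longlonglongrightarrow> complex_of_real (LINT x:{a<..b}|lborel. q x)"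
    using pq \<open>a \<le> b\<close> by (intro Levy_inversion_nonneg; simp)+
  have f_eq: "f = (\<lambda>x. p x - q x)"
    unfolding p_def q_def by auto
  have "fourier_char f t = fourier_char p t - fourier_char q t" for t
    by (subst f_eq) (rule fourier_char_diff; fact)
  moreover have "(LINT x:{a<..b}|lborel. f x) = (LINT x:{a<..b}|lborel. p x) - (LINT x:{a<..b}|lborel. q x)"
  proof -
    have "set_integrable lborel {a<..b} g" if "integrable lborel g" for g :: "real \<Rightarrow> real"
      unfolding set_integrable_def using integrable_mult_indicator[OF _ that, of "{a<..b}"] by simp
    then show ?thesis
      using pq by (subst f_eq) (intro set_integral_diff)
  qed
  moreover have "(\<lambda>t. integral {a..b} (\<lambda>x. iexp (-(t * x))) * fourier_char g t) integrable_on {- real T..real T}"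
    if "g \<in> borel_measurable borel" "integrable lborel g" for g T
    using continuous_on_interval_kernel continuous_on_fourier_char[OF that]
    by (intro integrable_continuous_interval continuous_intros) (auto intro: continuous_on_subset)
  ultimately show ?thesis
    using tendsto_diff[OF p_lim q_lim] pq
    by (simp add: right_diff_distrib integral_diff)
qed

lemma set_integral_greaterThanAtMost_eq_integral:
  fixes f :: "real \<Rightarrow> real"
  assumes "continuous_on UNIV f"
  shows "(LINT x:{a<..b}|lborel. f x) = integral {a..b} f"
proof -
  have [measurable]: "f \<in> borel_measurable borel"
    using assms by (rule borel_measurable_continuous_onI)
  have "(LINT x:{a<..b}|lborel. f x) = (LINT x:{a..b}|lborel. f x)"
    unfolding set_lebesgue_integral_def using AE_lborel_singleton[of a]
    by (intro integral_cong_AE) (auto elim!: eventually_mono simp: indicator_def)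
  also have "\<dots> = integral {a..b} f"
    using assms by (intro set_borel_integral_eq_integral borel_integrable_atLeastAtMost')
      (auto intro: continuous_on_subset)
  finally show ?thesis .
qed

lemma integral_symmetric_interval_eq:
  fixes K :: "real \<Rightarrow> 'a::banach"
  assumes "continuous_on UNIV K" and "\<sigma> \<le> T" and "\<And>t. \<bar>t\<bar> > \<sigma> \<Longrightarrow> K t = 0"
  shows "integral {-T..T} K = integral {-\<sigma>..\<sigma>} K"
proof -
  have "(K has_integral integral {-\<sigma>..\<sigma>} K) {-\<sigma>..\<sigma>}"
    using assms(1) by (intro integrable_integral integrable_continuous_interval) (auto intro: continuous_on_subset)
  then have "(K has_integral integral {-\<sigma>..\<sigma>} K) {-T..T}"
    by (rule has_integral_on_superset) (use assms(2,3) in auto)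
  then show ?thesis
    by (rule integral_unique)
qed

lemma bandlimited_interval_integral:
  fixes f :: "real \<Rightarrow> real"
  assumes cont: "continuous_on UNIV f" and f: "integrable lborel f"
    and vanish: "\<And>s. \<bar>s\<bar> > \<sigma> \<Longrightarrow> fourier_char f s = 0" and "a \<le> b"
  shows "integral {a..b} (\<lambda>x. complex_of_real (f x))
    = integral {a..b} (\<lambda>x. 1 / (2 * pi) * integral {-\<sigma>..\<sigma>} (\<lambda>t. iexp (-(t * x)) * fourier_char f t))"
proof -
  have [measurable]: "f \<in> borel_measurable borel"
    using cont by (rule borel_measurable_continuous_onI)
  have cont_char: "continuous_on UNIV (fourier_char f)"
    using continuous_on_fourier_char f by simp
  define K where "K = (\<lambda>t. integral {a..b} (\<lambda>x. iexp (-(t * x))) * fourier_char f t)"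
  have "continuous_on UNIV K"
    unfolding K_def using continuous_on_interval_kernel cont_char by (intro continuous_intros)
  moreover obtain T0 :: nat where "real T0 \<ge> \<sigma>"
    using real_arch_simple by blast
  ultimately have ev: "\<forall>\<^sub>F T in sequentially.
      1 / (2 * pi) * integral {- real T..real T} K = 1 / (2 * pi) * integral {-\<sigma>..\<sigma>} K"
    by (intro eventually_sequentiallyI[of T0] arg_cong[where f="(*) _"] integral_symmetric_interval_eq)
       (auto simp: K_def intro!: vanish)
  have "(\<lambda>T. 1 / (2 * pi) * integral {- real T..real T} K)
      \<longlonglongrightarrow> complex_of_real (LINT x:{a<..b}|lborel. f x)"
    unfolding K_def using Levy_inversion_integrable[OF _ f \<open>a \<le> b\<close>] by simp
  from Lim_transform_eventually[OF this ev]
  have "complex_of_real (LINT x:{a<..b}|lborel. f x) = 1 / (2 * pi) * integral {-\<sigma>..\<sigma>} K"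
    using LIMSEQ_unique tendsto_const by blast
  moreover have "(LINT x:{a<..b}|lborel. f x) = integral {a..b} f"
    using cont by (rule set_integral_greaterThanAtMost_eq_integral)
  moreover have "integral {a..b} (\<lambda>x. complex_of_real (f x)) = complex_of_real (integral {a..b} f)"
    using cont by (intro integral_unique has_integral_of_real integrable_integral
        integrable_continuous_interval) (auto intro: continuous_on_subset)
  moreover have "integral {-\<sigma>..\<sigma>} K
      = integral {a..b} (\<lambda>x. integral {-\<sigma>..\<sigma>} (\<lambda>t. iexp (-(t * x)) * fourier_char f t))"
  proof -
    have "continuous_on (cbox (-\<sigma>, a) (\<sigma>, b)) (\<lambda>(t, x). iexp (-(t * x)) * fourier_char f t)"
      by (auto intro!: continuous_intros continuous_on_compose2[OF cont_char] simp: split_beta)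
    from integral_swap_continuous[OF this] show ?thesis
      unfolding K_def by (simp add: integral_mult_left)
  qed
  ultimately show ?thesis
    by (simp add: integral_mult_right)
qed

lemma bandlimited_fourier_inversion:
  fixes f :: "real \<Rightarrow> real"
  assumes cont: "continuous_on UNIV f" and f: "integrable lborel f"
    and vanish: "\<And>s. \<bar>s\<bar> > \<sigma> \<Longrightarrow> fourier_char f s = 0"
  shows "complex_of_real (f x) = 1 / (2 * pi) * integral {-\<sigma>..\<sigma>} (\<lambda>t. iexp (-(t * x)) * fourier_char f t)"
proof -
  define G where "G = (\<lambda>x. 1 / (2 * pi) * integral {-\<sigma>..\<sigma>} (\<lambda>t. iexp (-(t * x)) * fourier_char f t))"
  have cont_char: "continuous_on UNIV (fourier_char f)"
    using continuous_on_fourier_char f cont borel_measurable_continuous_onI by blast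
  have "continuous_on (UNIV \<times> cbox (-\<sigma>) \<sigma>) (\<lambda>(x, t). iexp (-(t * x)) * fourier_char f t)"
    by (auto intro!: continuous_intros continuous_on_compose2[OF cont_char] simp: split_beta)
  from integral_continuous_on_param[OF this] have "continuous_on UNIV G"
    unfolding G_def by (intro continuous_intros) simp
  have "((\<lambda>u. integral {x-1..u} (\<lambda>y. complex_of_real (f y))) has_vector_derivative complex_of_real (f x))
      (at x within {x-1..x+1})"
    using cont by (intro integral_has_vector_derivative continuous_intros) (auto intro: continuous_on_subset)
  moreover have "((\<lambda>u. integral {x-1..u} G) has_vector_derivative G x) (at x within {x-1..x+1})"
    using \<open>continuous_on UNIV G\<close> by (intro integral_has_vector_derivative) (auto intro: continuous_on_subset)
  moreover have "((\<lambda>u. integral {x-1..u} G) has_vector_derivative complex_of_real (f x))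
      (at x within {x-1..x+1})"
  proof (rule has_vector_derivative_transform[OF _ _ calculation(1)])
    show "integral {x-1..u} G = integral {x-1..u} (\<lambda>y. complex_of_real (f y))"
      if "u \<in> {x-1..x+1}" for u
      unfolding G_def using that
      by (intro bandlimited_interval_integral[where \<sigma>=\<sigma>, symmetric] cont f vanish) auto
  qed simp
  ultimately have "complex_of_real (f x) = G x"
    by (intro vector_derivative_unique_within_closed_interval[of "x-1" "x+1"]) auto
  then show ?thesis unfolding G_def .
qed

lemma inverse_fourier_has_vector_derivative:
  fixes \<psi> :: "real \<Rightarrow> complex"
  assumes "continuous_on {-\<sigma>..\<sigma>} \<psi>"
  shows "((\<lambda>y. integral {-\<sigma>..\<sigma>} (\<lambda>t. iexp (-(t * y)) * \<psi> t)) has_vector_derivative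
      integral {-\<sigma>..\<sigma>} (\<lambda>t. - (\<i> * t * iexp (-(t * x))) * \<psi> t)) (at x)"
proof -
  have "continuous_on (UNIV \<times> cbox (-\<sigma>) \<sigma>) (\<lambda>(y, t). - (\<i> * t * iexp (-(t * y))) * \<psi> t)"
    by (auto intro!: continuous_intros continuous_on_compose2[OF assms] simp: split_beta)
  moreover have "(\<lambda>t. iexp (-(t * y)) * \<psi> t) integrable_on cbox (-\<sigma>) \<sigma>" for y
    using assms by (auto intro!: integrable_continuous_interval continuous_intros)
  ultimately have "((\<lambda>y. integral (cbox (-\<sigma>) \<sigma>) (\<lambda>t. iexp (-(t * y)) * \<psi> t)) has_vector_derivative
      integral (cbox (-\<sigma>) \<sigma>) (\<lambda>t. - (\<i> * t * iexp (-(t * x))) * \<psi> t)) (at x within UNIV)"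
    by (intro leibniz_rule_vector_derivative has_vector_derivative_mult_left
        has_vector_derivative_iexp_linear) auto
  then show ?thesis by simp
qed

lemma iexp_mult_sin:
  fixes c :: complex and y z :: real
  shows "\<i> * (2 * c * sin y) * iexp z = c * (iexp (z + y) - iexp (z - y))"
proof -
  have "iexp y = cis y" "iexp (-y) = cis (-y)"
    by (simp_all add: cis_conv_exp)
  then have "iexp y - iexp (-y) = 2 * \<i> * sin y"
    by (simp add: complex_eq_iff)
  moreover have "iexp (z + y) = iexp z * iexp y" "iexp (z - y) = iexp z * iexp (-y)"
    by (simp_all add: exp_add[symmetric] algebra_simps)
  ultimately show ?thesis
    by (simp add: algebra_simps)
qed

lemma bandlimited_has_derivative:
  fixes f :: "real \<Rightarrow> real"
  assumes cont: "continuous_on UNIV f" and f: "integrable lborel f"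
    and vanish: "\<And>s. \<bar>s\<bar> > \<sigma> \<Longrightarrow> fourier_char f s = 0"
  shows "(f has_real_derivative
      Re (1 / (2 * pi) * integral {-\<sigma>..\<sigma>} (\<lambda>t. - (\<i> * t * iexp (-(t * x))) * fourier_char f t))) (at x)"
proof -
  have "continuous_on UNIV (fourier_char f)"
    using continuous_on_fourier_char f cont borel_measurable_continuous_onI by blast
  then have "((\<lambda>y. Re (1 / (2 * pi) * integral {-\<sigma>..\<sigma>} (\<lambda>t. iexp (-(t * y)) * fourier_char f t)))
      has_vector_derivative
      Re (1 / (2 * pi) * integral {-\<sigma>..\<sigma>} (\<lambda>t. - (\<i> * t * iexp (-(t * x))) * fourier_char f t))) (at x)"
    by (intro bounded_linear.has_vector_derivative[OF bounded_linear_Re] has_vector_derivative_mult_right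
        inverse_fourier_has_vector_derivative) (auto intro: continuous_on_subset)
  moreover have "(\<lambda>y. Re (1 / (2 * pi) * integral {-\<sigma>..\<sigma>} (\<lambda>t. iexp (-(t * y)) * fourier_char f t))) = f"
  proof
    fix y
    show "Re (1 / (2 * pi) * integral {-\<sigma>..\<sigma>} (\<lambda>t. iexp (-(t * y)) * fourier_char f t)) = f y"
      using bandlimited_fourier_inversion[where \<sigma>=\<sigma>, OF cont f vanish, of y] by (metis Re_complex_of_real)
  qed
  ultimately show ?thesis
    by (simp add: has_real_derivative_iff_has_vector_derivative)
qed

lemma bandlimited_sine_multiplier:
  fixes f :: "real \<Rightarrow> real"
  assumes cont: "continuous_on UNIV f" and f: "integrable lborel f"
    and vanish: "\<And>s. \<bar>s\<bar> > \<sigma> \<Longrightarrow> fourier_char f s = 0"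
  shows "1 / (2 * pi) * integral {-\<sigma>..\<sigma>}
      (\<lambda>t. \<i> * complex_of_real (2 * sin (\<omega> * t)) * (iexp (-(t * x)) * fourier_char f t))
    = f (x - \<omega>) - f (x + \<omega>)"
proof -
  have "continuous_on UNIV (fourier_char f)"
    using continuous_on_fourier_char f cont borel_measurable_continuous_onI by blast
  then have int: "(\<lambda>t. iexp (-(t * y)) * fourier_char f t) integrable_on {-\<sigma>..\<sigma>}" for y
    by (intro integrable_continuous_interval continuous_intros) (auto intro: continuous_on_subset)
  have mult_sin: "\<i> * complex_of_real (2 * sin (\<omega> * t)) * iexp (-(t * x)) = iexp (-(t * (x - \<omega>))) - iexp (-(t * (x + \<omega>)))" for t
  proof -
    have "-(t * x) + \<omega> * t = -(t * (x - \<omega>))" "-(t * x) - \<omega> * t = -(t * (x + \<omega>))"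
      by (simp_all add: algebra_simps)
    with iexp_mult_sin[of 1 "\<omega> * t" "-(t * x)"] show ?thesis
      by (simp only: mult_1 mult_1_right of_real_mult of_real_numeral)
  qed
  have "(\<lambda>t. \<i> * complex_of_real (2 * sin (\<omega> * t)) * (iexp (-(t * x)) * fourier_char f t))
      = (\<lambda>t. iexp (-(t * (x - \<omega>))) * fourier_char f t - iexp (-(t * (x + \<omega>))) * fourier_char f t)"
    by (intro ext) (simp only: mult.assoc[symmetric], simp only: mult_sin left_diff_distrib)
  then have "integral {-\<sigma>..\<sigma>}
      (\<lambda>t. \<i> * complex_of_real (2 * sin (\<omega> * t)) * (iexp (-(t * x)) * fourier_char f t))
      = integral {-\<sigma>..\<sigma>} (\<lambda>t. iexp (-(t * (x - \<omega>))) * fourier_char f t)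
        - integral {-\<sigma>..\<sigma>} (\<lambda>t. iexp (-(t * (x + \<omega>))) * fourier_char f t)"
    by (simp only: integral_diff[OF int int])
  then show ?thesis
    by (simp only: right_diff_distrib[where a="complex_of_real (1 / (2 * pi))"] of_real_diff
        bandlimited_fourier_inversion[where \<sigma>=\<sigma>, OF cont f vanish, symmetric])
qed

lemma bandlimited_odd_sine_multiplier_bound:
  fixes f :: "real \<Rightarrow> real"
  assumes cont: "continuous_on UNIV f" and f: "integrable lborel f"
    and vanish: "\<And>s. \<bar>s\<bar> > \<sigma> \<Longrightarrow> fourier_char f s = 0"
    and bound: "\<And>t. \<bar>f t\<bar> \<le> M" and "\<sigma>' > 0"
  shows "norm (1 / (2 * pi) * integral {-\<sigma>..\<sigma>} (\<lambda>t. \<i> * complex_of_real (8 * \<sigma>' / pi^2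
      * odd_sine_sum N (pi / (2 * \<sigma>') * t)) * (iexp (-(t * x)) * fourier_char f t))) \<le> \<sigma>' * M"
proof -
  define \<omega> where "\<omega> = (\<lambda>k::nat. real (2*k+1) * pi / (2 * \<sigma>'))"
  define c where "c = (\<lambda>k::nat. 4 * \<sigma>' / pi^2 * (-1)^k / (real (2*k+1))^2)"
  define e where "e = (\<lambda>t. iexp (-(t * x)) * fourier_char f t)"
  have "continuous_on UNIV (fourier_char f)"
    using continuous_on_fourier_char f cont borel_measurable_continuous_onI by blast
  then have int: "(\<lambda>t. \<i> * complex_of_real (2 * sin (\<omega> k * t)) * e t) integrable_on {-\<sigma>..\<sigma>}" for k
    unfolding e_def by (intro integrable_continuous_interval continuous_intros) (auto intro: continuous_on_subset)
  have "8 * \<sigma>' / pi^2 * odd_sine_sum N (pi / (2 * \<sigma>') * t) = (\<Sum>k<N. c k * (2 * sin (\<omega> k * t)))" for t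
    unfolding odd_sine_sum_def sum_distrib_left c_def \<omega>_def
    by (intro sum.cong refl) (simp add: field_simps)
  then have "1 / (2 * pi) * integral {-\<sigma>..\<sigma>} (\<lambda>t. \<i> * complex_of_real (8 * \<sigma>' / pi^2
      * odd_sine_sum N (pi / (2 * \<sigma>') * t)) * e t)
    = 1 / (2 * pi) * integral {-\<sigma>..\<sigma>} (\<lambda>t. \<Sum>k<N. c k * (\<i> * complex_of_real (2 * sin (\<omega> k * t)) * e t))"
    by (simp add: sum_distrib_left sum_distrib_right ac_simps)
  also have "\<dots> = (\<Sum>k<N. c k * (1 / (2 * pi) * integral {-\<sigma>..\<sigma>}
      (\<lambda>t. \<i> * complex_of_real (2 * sin (\<omega> k * t)) * e t)))"
    by (simp only: integral_sum[OF finite_lessThan integrable_on_cmult_left[OF int]] integral_mult_right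
        sum_distrib_left mult.left_commute)
  also have "\<dots> = (\<Sum>k<N. c k * (f (x - \<omega> k) - f (x + \<omega> k)))"
    unfolding e_def
    by (simp only: bandlimited_sine_multiplier[where \<sigma>=\<sigma>, OF cont f vanish]) simp
  finally have "norm (1 / (2 * pi) * integral {-\<sigma>..\<sigma>} (\<lambda>t. \<i> * complex_of_real (8 * \<sigma>' / pi^2
      * odd_sine_sum N (pi / (2 * \<sigma>') * t)) * e t)) = norm (\<Sum>k<N. c k * (f (x - \<omega> k) - f (x + \<omega> k)))"
    by (simp flip: of_real_diff of_real_mult of_real_sum)
  also have "\<dots> \<le> (\<Sum>k<N. \<bar>c k\<bar> * (2 * M))"
  proof (rule order_trans[OF norm_sum sum_mono])
    fix k
    have "\<bar>f (x - \<omega> k) - f (x + \<omega> k)\<bar> \<le> 2 * M"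
      using bound[of "x - \<omega> k"] bound[of "x + \<omega> k"] by linarith
    then show "norm (c k * (f (x - \<omega> k) - f (x + \<omega> k))) \<le> \<bar>c k\<bar> * (2 * M)"
      by (simp add: abs_mult mult_left_mono)
  qed
  also have "\<dots> = 8 * \<sigma>' / pi^2 * M * (\<Sum>k<N. 1 / (real (2*k+1))^2)"
    unfolding c_def using \<open>\<sigma>' > 0\<close> by (simp add: sum_distrib_left abs_mult power_abs mult.assoc)
  also have "\<dots> \<le> 8 * \<sigma>' / pi^2 * M * (pi^2 / 8)"
    using sum_odd_inverse_squares_le \<open>\<sigma>' > 0\<close> bound[of 0] by (intro mult_left_mono) auto
  finally show ?thesis
    unfolding e_def by simp
qed

lemma le_of_le_add_mult_pos:
  fixes x y C :: real
  assumes "\<And>\<delta>. \<delta> > 0 \<Longrightarrow> x \<le> y + C * \<delta>" and "C \<ge> 0"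
  shows "x \<le> y"
proof (rule field_le_epsilon)
  fix \<epsilon> :: real assume "\<epsilon> > 0"
  then have "x \<le> y + C * (\<epsilon> / (C + 1))"
    using \<open>C \<ge> 0\<close> by (intro assms(1)) simp
  moreover have "C * (\<epsilon> / (C + 1)) \<le> \<epsilon>"
    using \<open>\<epsilon> > 0\<close> \<open>C \<ge> 0\<close> by (simp add: field_simps)
  ultimately show "x \<le> y + \<epsilon>" by linarith
qed

lemma norm_inverse_fourier_multiplier_le:
  fixes m :: "real \<Rightarrow> real" and e :: "real \<Rightarrow> complex"
  assumes "continuous_on {-\<sigma>..\<sigma>} m" "continuous_on {-\<sigma>..\<sigma>} e" "0 \<le> \<sigma>"
    and "\<And>t. t \<in> {-\<sigma>..\<sigma>} \<Longrightarrow> \<bar>m t\<bar> \<le> \<delta>" "\<And>t. t \<in> {-\<sigma>..\<sigma>} \<Longrightarrow> norm (e t) \<le> B"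
  shows "norm (1 / (2 * pi) * integral {-\<sigma>..\<sigma>} (\<lambda>t. \<i> * complex_of_real (m t) * e t)) \<le> \<delta> * B * \<sigma> / pi"
proof -
  have "norm (integral {-\<sigma>..\<sigma>} (\<lambda>t. \<i> * complex_of_real (m t) * e t)) \<le> \<delta> * B * (\<sigma> - - \<sigma>)"
  proof (rule integral_bound)
    fix t assume "t \<in> {-\<sigma>..\<sigma>}"
    moreover have "0 \<le> \<delta>"
      using assms(3) assms(4)[of \<sigma>] by auto
    ultimately show "norm (\<i> * complex_of_real (m t) * e t) \<le> \<delta> * B"
      using assms(4,5) by (simp add: norm_mult mult_mono)
  qed (use assms in \<open>auto intro!: continuous_intros\<close>)
  from divide_right_mono[OF this, of "2 * pi"] show ?thesis
    by (simp add: norm_divide norm_mult)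
qed

lemma inverse_fourier_multiplier_add:
  fixes h :: "real \<Rightarrow> real" and e :: "real \<Rightarrow> complex"
  assumes "continuous_on {-\<sigma>..\<sigma>} h" "continuous_on {-\<sigma>..\<sigma>} e"
  shows "1 / (2 * pi) * integral {-\<sigma>..\<sigma>} (\<lambda>t. - (\<i> * t * e t))
      + 1 / (2 * pi) * integral {-\<sigma>..\<sigma>} (\<lambda>t. \<i> * complex_of_real (h t) * e t)
    = 1 / (2 * pi) * integral {-\<sigma>..\<sigma>} (\<lambda>t. \<i> * complex_of_real (h t - t) * e t)"
proof -
  have "(\<lambda>t. - (\<i> * t * e t)) integrable_on {-\<sigma>..\<sigma>}"
    "(\<lambda>t. \<i> * complex_of_real (h t) * e t) integrable_on {-\<sigma>..\<sigma>}"
    using assms by (auto intro!: integrable_continuous_interval continuous_intros)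
  from integral_add[OF this] have "integral {-\<sigma>..\<sigma>} (\<lambda>t. - (\<i> * t * e t))
      + integral {-\<sigma>..\<sigma>} (\<lambda>t. \<i> * complex_of_real (h t) * e t)
      = integral {-\<sigma>..\<sigma>} (\<lambda>t. - (\<i> * t * e t) + \<i> * complex_of_real (h t) * e t)"
    by (rule sym)
  also have "(\<lambda>t. - (\<i> * t * e t) + \<i> * complex_of_real (h t) * e t)
      = (\<lambda>t. \<i> * complex_of_real (h t - t) * e t)"
    by (rule ext) (simp add: algebra_simps)
  finally show ?thesis
    by (simp only: distrib_left[symmetric])
qed

lemma bandlimited_derivative_bound:
  fixes f :: "real \<Rightarrow> real"
  assumes cont: "continuous_on UNIV f" and f: "integrable lborel f"
    and vanish: "\<And>s. \<bar>s\<bar> > \<sigma> \<Longrightarrow> fourier_char f s = 0"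
    and bound: "\<And>t. \<bar>f t\<bar> \<le> M" and \<sigma>: "0 \<le> \<sigma>" "\<sigma> < \<sigma>'"
  shows "\<exists>D. (f has_real_derivative D) (at x) \<and> \<bar>D\<bar> \<le> \<sigma>' * M"
proof -
  define \<kappa> where "\<kappa> = 8 * \<sigma>' / pi^2"
  define \<omega> where "\<omega> = pi / (2 * \<sigma>')"
  define e where "e = (\<lambda>t. iexp (-(t * x)) * fourier_char f t)"
  define D where "D = 1 / (2 * pi) * integral {-\<sigma>..\<sigma>} (\<lambda>t. - (\<i> * t * e t))"
  define I where "I = (\<lambda>N. 1 / (2 * pi) * integral {-\<sigma>..\<sigma>}
      (\<lambda>t. \<i> * complex_of_real (\<kappa> * odd_sine_sum N (\<omega> * t)) * e t))"
  have "\<sigma>' > 0" "\<kappa> > 0"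
    using \<sigma> by (auto simp: \<kappa>_def)
  have "continuous_on UNIV (fourier_char f)"
    using continuous_on_fourier_char f cont borel_measurable_continuous_onI by blast
  then have cont_e: "continuous_on {-\<sigma>..\<sigma>} e"
    unfolding e_def by (intro continuous_intros) (auto intro: continuous_on_subset)
  obtain B where B: "B > 0" "\<And>t. t \<in> {-\<sigma>..\<sigma>} \<Longrightarrow> norm (e t) \<le> B"
    using compact_imp_bounded[OF compact_continuous_image[OF cont_e compact_Icc]]
    by (auto simp: bounded_pos)
  have "norm D \<le> \<sigma>' * M + \<kappa> * B * \<sigma> / pi * \<delta>" if "\<delta> > 0" for \<delta>
  proof -
    obtain N where "\<And>t. t \<in> {-\<sigma>..\<sigma>} \<Longrightarrow> \<bar>\<kappa> * odd_sine_sum N (\<omega> * t) - t\<bar> \<le> \<kappa> * \<delta>"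
      using odd_sine_sum_scaled_approx[OF \<sigma> \<open>\<delta> > 0\<close>] unfolding \<kappa>_def \<omega>_def by blast
    moreover have "D + I N
        = 1 / (2 * pi) * integral {-\<sigma>..\<sigma>} (\<lambda>t. \<i> * complex_of_real (\<kappa> * odd_sine_sum N (\<omega> * t) - t) * e t)"
      unfolding D_def I_def by (rule inverse_fourier_multiplier_add) (auto intro!: continuous_intros cont_e)
    ultimately have "norm (D + I N) \<le> \<kappa> * \<delta> * B * \<sigma> / pi"
      using cont_e B(2) \<sigma> by (simp only:) (rule norm_inverse_fourier_multiplier_le, auto intro!: continuous_intros)
    moreover have "norm (I N) \<le> \<sigma>' * M"
      unfolding I_def e_def \<kappa>_def \<omega>_def
      by (rule bandlimited_odd_sine_multiplier_bound[OF cont f vanish bound \<open>\<sigma>' > 0\<close>])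
    moreover have "\<kappa> * \<delta> * B * \<sigma> / pi = \<kappa> * B * \<sigma> / pi * \<delta>"
      by (simp add: field_simps)
    moreover have "norm D \<le> norm (D + I N) + norm (I N)"
      using norm_triangle_ineq4[of "D + I N" "I N"] by (simp only: add_diff_cancel_right')
    ultimately show ?thesis
      by linarith
  qed
  then have "norm D \<le> \<sigma>' * M"
    by (rule le_of_le_add_mult_pos[where C="\<kappa> * B * \<sigma> / pi"]) (use \<open>\<kappa> > 0\<close> B \<sigma> in auto)
  moreover have "(f has_real_derivative Re D) (at x)"
    using bandlimited_has_derivative[where \<sigma>=\<sigma> and x=x, OF cont f vanish]
    unfolding D_def e_def by (simp only: mult.assoc minus_mult_left)
  ultimately show ?thesis
    using abs_Re_le_cmod[of D] by (intro exI[of _ "Re D"]) auto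
qed

lemma le_of_le_divide_one_plus_square:
  fixes a A t :: real
  assumes "a \<le> A / (1 + t^2)" and "0 \<le> a"
  shows "a \<le> A"
proof -
  have "1 + t^2 > 0"
    by (simp add: add_pos_nonneg)
  moreover have "0 \<le> A / (1 + t^2)"
    using assms by linarith
  ultimately have "A \<ge> 0"
    by (simp add: zero_le_divide_iff)
  then have "A / (1 + t^2) \<le> A"
    using divide_left_mono[of 1 "1 + t^2" A] \<open>1 + t^2 > 0\<close> by simp
  with assms(1) show ?thesis by linarith
qed

lemma strict_mono_perturbed_linear:
  fixes f :: "real \<Rightarrow> real"
  assumes "\<And>x. \<exists>D. (f has_real_derivative D) (at x) \<and> \<bar>D\<bar> < \<alpha>"
  shows "strict_mono (\<lambda>t. \<alpha> * t + f t)"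
proof (rule strict_monoI)
  fix a b :: real assume "a < b"
  show "\<alpha> * a + f a < \<alpha> * b + f b"
  proof (rule DERIV_pos_imp_increasing[OF \<open>a < b\<close>])
    fix x
    obtain D where "(f has_real_derivative D) (at x)" "\<bar>D\<bar> < \<alpha>"
      using assms by blast
    then show "\<exists>y. ((\<lambda>t. \<alpha> * t + f t) has_real_derivative y) (at x) \<and> y > 0"
      by (intro exI[of _ "\<alpha> + D"]) (auto intro!: derivative_eq_intros)
  qed
qed

lemma bandlimited_strict_mono_perturbed_linear:
  fixes f :: "real \<Rightarrow> real"
  assumes cont: "continuous_on UNIV f" and f: "integrable lborel f"
    and vanish: "\<And>s. \<bar>s\<bar> > \<sigma> \<Longrightarrow> fourier_char f s = 0"
    and bound: "\<And>t. \<bar>f t\<bar> \<le> M" and "0 \<le> \<sigma>" "M > 0" "\<sigma> * M < \<alpha>"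
  shows "strict_mono (\<lambda>t. \<alpha> * t + f t)"
proof (rule strict_mono_perturbed_linear)
  fix x
  define \<sigma>' where "\<sigma>' = (\<sigma> + \<alpha> / M) / 2"
  have "\<sigma> < \<sigma>'" "\<sigma>' * M < \<alpha>"
    using \<open>M > 0\<close> \<open>\<sigma> * M < \<alpha>\<close> by (simp_all add: \<sigma>'_def field_simps)
  then obtain D where "(f has_real_derivative D) (at x)" "\<bar>D\<bar> \<le> \<sigma>' * M"
    using bandlimited_derivative_bound[OF cont f vanish bound \<open>0 \<le> \<sigma>\<close>] by blast
  with \<open>\<sigma>' * M < \<alpha>\<close> show "\<exists>D. (f has_real_derivative D) (at x) \<and> \<bar>D\<bar> < \<alpha>"
    by (intro exI[of _ D]) simp
qed

lemma surj_perturbed_linear: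
  fixes f :: "real \<Rightarrow> real"
  assumes "\<alpha> > 0" and "continuous_on UNIV f" and "\<And>t. \<bar>f t\<bar> \<le> A"
  shows "surj (\<lambda>t. \<alpha> * t + f t)"
proof -
  have "\<exists>t. \<alpha> * t + f t = u" for u
  proof -
    define a where "a = (u - A) / \<alpha>"
    define b where "b = (u + A) / \<alpha>"
    have "\<alpha> * a = u - A" "\<alpha> * b = u + A"
      using assms(1) by (simp_all add: a_def b_def)
    then have "\<alpha> * a + f a \<le> u" "u \<le> \<alpha> * b + f b"
      using assms(3)[of a] assms(3)[of b] by linarith+
    moreover have "a \<le> b"
      unfolding a_def b_def using assms(1) assms(3)[of 0] by (simp add: divide_right_mono)
    moreover have "isCont (\<lambda>t. \<alpha> * t + f t) x" for x
      using assms(2) by (auto intro!: continuous_intros simp: continuous_on_eq_continuous_at)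
    ultimately show ?thesis
      using IVT[of "\<lambda>t. \<alpha> * t + f t" a u b] by blast
  qed
  then show ?thesis
    unfolding surj_def by (metis)
qed

lemma isCont_inv_strict_mono:
  fixes g :: "real \<Rightarrow> real"
  assumes "\<And>x. isCont g x" "strict_mono g" "surj g"
  shows "isCont (inv g) u"
proof -
  have "inj g"
    using strict_mono_on_imp_inj_on[OF assms(2)] by simp
  have "isCont (inv g) (g (inv g u))"
    by (rule isCont_inverse_function[where d=1]) (simp_all add: inv_f_f[OF \<open>inj g\<close>] assms(1))
  then show ?thesis
    by (simp only: surj_f_inv_f[OF assms(3)])
qed

lemma perturbed_linear_inv_eq:
  assumes "surj (\<lambda>t. \<alpha> * t + f t)"
  shows "\<alpha> * inv (\<lambda>t. \<alpha> * t + f t) u + f (inv (\<lambda>t. \<alpha> * t + f t) u) = u"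
  using surj_f_inv_f[OF assms, of u] by simp

lemma slope_eq_of_moderate_decrease_inv_perturbed_linear:
  fixes f :: "real \<Rightarrow> real"
  assumes "\<alpha> > 0" and surj: "surj (\<lambda>t. \<alpha> * t + f t)" and bound: "\<And>t. \<bar>f t\<bar> \<le> A"
    and "moderate_decrease (\<lambda>u. inv (\<lambda>t. \<alpha> * t + f t) u - \<beta> * u)"
  shows "\<beta> = 1 / \<alpha>"
proof (rule ccontr)
  assume "\<beta> \<noteq> 1 / \<alpha>"
  define g where "g = (\<lambda>t. \<alpha> * t + f t)"
  obtain A' where A': "\<And>u. \<bar>inv g u - \<beta> * u\<bar> \<le> A' / (1 + u^2)" "A' > 0"
    using assms(4) unfolding moderate_decrease_def g_def by blast
  define d where "d = \<bar>1 / \<alpha> - \<beta>\<bar>"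
  define u where "u = (A' + A / \<alpha> + 1) / d"
  have "d > 0" "A \<ge> 0"
    using \<open>\<beta> \<noteq> 1 / \<alpha>\<close> bound[of 0] by (auto simp: d_def)
  have "\<bar>inv g u - u / \<alpha>\<bar> \<le> A / \<alpha>"
    using perturbed_linear_inv_eq[OF surj, of u] bound[of "inv g u"] \<open>\<alpha> > 0\<close>
    by (simp add: g_def field_simps)
  moreover have "\<bar>(1 / \<alpha> - \<beta>) * u\<bar> = A' + A / \<alpha> + 1"
    using \<open>d > 0\<close> \<open>A \<ge> 0\<close> \<open>\<alpha> > 0\<close> A'(2) by (simp add: u_def abs_mult flip: d_def)
  moreover have "inv g u - \<beta> * u = (1 / \<alpha> - \<beta>) * u + (inv g u - u / \<alpha>)"
    by (simp add: algebra_simps)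
  ultimately have "\<bar>inv g u - \<beta> * u\<bar> \<ge> A' + 1"
    by linarith
  moreover have "A' / (1 + u^2) \<le> A'"
    using divide_left_mono[of 1 "1 + u^2" A'] A'(2) by (simp add: add_pos_nonneg)
  ultimately show False
    using A'(1)[of u] by linarith
qed

lemma one_plus_square_perturbed_le:
  fixes \<alpha> v w A :: real
  assumes "\<bar>w\<bar> \<le> A"
  shows "1 + (\<alpha> * v + w)^2 \<le> (1 + 2 * A^2 + 2 * \<alpha>^2) * (1 + v^2)"
proof -
  have "(\<alpha> * v + w)^2 \<le> 2 * (\<alpha> * v)^2 + 2 * w^2"
    using zero_le_power2[of "\<alpha> * v - w"] by (simp add: power2_diff power2_sum)
  moreover have "w^2 \<le> A^2"
    using assms by (metis abs_ge_zero power2_abs power_mono)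
  moreover have "(1 + 2 * A^2 + 2 * \<alpha>^2) * (1 + v^2)
      = 1 + 2 * (\<alpha> * v)^2 + 2 * A^2 + (v^2 + 2 * A^2 * v^2 + 2 * \<alpha>^2)"
    by (simp add: algebra_simps power_mult_distrib)
  moreover have "0 \<le> v^2 + 2 * A^2 * v^2 + 2 * \<alpha>^2"
    by simp
  ultimately show ?thesis
    by linarith
qed

lemma moderate_decrease_inv_perturbed_linear:
  fixes f :: "real \<Rightarrow> real"
  assumes "\<alpha> > 0" "A > 0" and cont: "continuous_on UNIV f"
    and decay: "\<And>t. \<bar>f t\<bar> \<le> A / (1 + t^2)" and mono: "strict_mono (\<lambda>t. \<alpha> * t + f t)"
  shows "moderate_decrease (\<lambda>u. inv (\<lambda>t. \<alpha> * t + f t) u - 1 / \<alpha> * u)"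
proof -
  define g where "g = (\<lambda>t. \<alpha> * t + f t)"
  have bound: "\<bar>f t\<bar> \<le> A" for t
    using decay by (rule le_of_le_divide_one_plus_square) simp
  have surj: "surj g"
    unfolding g_def using \<open>\<alpha> > 0\<close> cont bound by (rule surj_perturbed_linear)
  have inv_g: "\<alpha> * inv g u + f (inv g u) = u" for u
    using perturbed_linear_inv_eq[OF surj[unfolded g_def]] unfolding g_def .
  have "isCont g x" for x
    using cont by (auto intro!: continuous_intros simp: g_def continuous_on_eq_continuous_at)
  then have "isCont (inv g) u" for u
    using mono surj unfolding g_def by (rule isCont_inv_strict_mono)
  then have "continuous_on UNIV (\<lambda>u. inv g u - 1 / \<alpha> * u)"
    by (intro continuous_at_imp_continuous_on ballI continuous_intros)
  moreover have "\<bar>inv g u - 1 / \<alpha> * u\<bar> \<le> A * (1 + 2 * A^2 + 2 * \<alpha>^2) / \<alpha> / (1 + u^2)" for u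
  proof -
    define v where "v = inv g u"
    define C where "C = 1 + 2 * A^2 + 2 * \<alpha>^2"
    have "C > 0" "1 + v^2 > 0"
      by (simp_all add: C_def add_pos_nonneg)
    have "\<bar>inv g u - 1 / \<alpha> * u\<bar> = \<bar>f v\<bar> / \<alpha>"
      using inv_g[of u] \<open>\<alpha> > 0\<close> by (simp add: v_def field_simps)
    also have "\<dots> \<le> A / (1 + v^2) / \<alpha>"
      using divide_right_mono[OF decay[of v], of \<alpha>] \<open>\<alpha> > 0\<close> by simp
    also have "\<dots> = A * C / \<alpha> / (C * (1 + v^2))"
      using \<open>C > 0\<close> by simp
    also have "\<dots> \<le> A * C / \<alpha> / (1 + u^2)"
      using one_plus_square_perturbed_le[OF bound[of v], of \<alpha> v] inv_g[of u] \<open>A > 0\<close> \<open>C > 0\<close> \<open>\<alpha> > 0\<close>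
      by (intro divide_left_mono) (auto simp: v_def C_def add_pos_nonneg)
    finally show ?thesis
      unfolding C_def .
  qed
  moreover have "A * (1 + 2 * A^2 + 2 * \<alpha>^2) / \<alpha> > 0"
    using \<open>A > 0\<close> \<open>\<alpha> > 0\<close> by (simp add: add_pos_nonneg)
  ultimately show ?thesis
    unfolding moderate_decrease_def g_def by blast
qed

lemma moderate_decrease_inv_perturbed_linear_iff:
  fixes f :: "real \<Rightarrow> real"
  assumes "\<alpha> > 0" "A > 0" and cont: "continuous_on UNIV f"
    and decay: "\<And>t. \<bar>f t\<bar> \<le> A / (1 + t^2)" and mono: "strict_mono (\<lambda>t. \<alpha> * t + f t)"
  shows "moderate_decrease (\<lambda>u. inv (\<lambda>t. \<alpha> * t + f t) u - \<beta> * u) \<longleftrightarrow> \<beta> = 1 / \<alpha>"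
proof
  have bound: "\<bar>f t\<bar> \<le> A" for t
    using decay by (rule le_of_le_divide_one_plus_square) simp
  assume "moderate_decrease (\<lambda>u. inv (\<lambda>t. \<alpha> * t + f t) u - \<beta> * u)"
  with \<open>\<alpha> > 0\<close> surj_perturbed_linear[OF \<open>\<alpha> > 0\<close> cont bound] bound
  show "\<beta> = 1 / \<alpha>"
    by (rule slope_eq_of_moderate_decrease_inv_perturbed_linear)
next
  assume "\<beta> = 1 / \<alpha>"
  with moderate_decrease_inv_perturbed_linear[OF assms]
  show "moderate_decrease (\<lambda>u. inv (\<lambda>t. \<alpha> * t + f t) u - \<beta> * u)"
    by simp
qed

theorem mainTheorem7:
  fixes f :: "real \<Rightarrow> real" and \<sigma> A \<alpha> \<beta> :: real
  assumes "\<sigma> > 0" and "A > 0"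
    and "continuous_on UNIV f"
    and "bandlimited f \<sigma>"
    and "\<And>t. \<bar>f t\<bar> \<le> A / (1 + t^2)"
    and "\<alpha> > A * \<sigma>"
  shows "moderate_decrease (\<lambda>u. inv (\<lambda>t. \<alpha> * t + f t) u - \<beta> * u) \<longleftrightarrow> \<beta> = 1 / \<alpha>"
proof -
  note cont = assms(3) and decay = assms(5)
  have meas: "f \<in> borel_measurable borel"
    using cont by (rule borel_measurable_continuous_onI)
  have int: "integrable lborel f"
    using meas decay by (rule integrable_inverse_square_bound)
  have "\<And>s. \<bar>s\<bar> > \<sigma> \<Longrightarrow> fourier_char f s = 0"
    using bandlimited_fourier_char_eq_0[OF int meas assms(4)] .
  moreover have "\<bar>f t\<bar> \<le> A" for t
    using decay by (rule le_of_le_divide_one_plus_square) simp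
  ultimately have "strict_mono (\<lambda>t. \<alpha> * t + f t)"
    using assms(1,2,6) by (intro bandlimited_strict_mono_perturbed_linear[OF cont int]) (auto simp: mult.commute)
  moreover have "\<alpha> > 0"
    using mult_pos_pos[OF assms(2,1)] assms(6) by linarith
  ultimately show ?thesis
    using moderate_decrease_inv_perturbed_linear_iff[OF _ \<open>A > 0\<close> cont decay] by blast
qed

end
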